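(* Let $f:\{0,1\}^n\to\{-1,1\}$ and $J\subseteq[n]$. Then $$\mathrm{SymInf}_f(J)=\tfrac12\sum_{S\subseteq[n]}\mathop{\mathbf{Var}}_{\pi\in\mathcal{S}_J}\big[\widehat f(\pi S)\big],$$ where $\pi$ is uniform in $\mathcal{S}_J$ and $\pi S=\{\pi(i):i\in S\}$.
   Context: $\mathcal{S}_J$ is the set of permutations of $[n]$ fixing every element outside $J$. For $x\in\{0,1\}^n$ and a permutation $\pi$, $\pi x$ is the vector whose $\pi(i)$-th coordinate is $x_i$. The symmetric influence of $J$ is $\mathrm{SymInf}_f(J)=\Pr_{x,\pi}[f(x)\ne f(\pi x)]$ with $x$ uniform in $\{0,1\}^n$ and $\pi$ uniform in $\mathcal{S}_J$. For $S\subseteq[n]$, $\chi_S(x)=(-1)^{\sum_{i\in S}x_i}$ and $\widehat f(S)=\mathbf{E}_x[f(x)\chi_S(x)]$ is the Fourier coefficient. *)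

theory Defs
  imports "HOL-Analysis.Analysis" "HOL-Combinatorics.Permutations"
begin

text \<open>Points of the cube {0,1}^n, indexed by [n] = {0..<n}: boolean functions
  on nat that are False outside {0..<n} (True means coordinate 1).\<close>
definition cube :: "nat \<Rightarrow> (nat \<Rightarrow> bool) set" where
  "cube n = {x. \<forall>i. n \<le> i \<longrightarrow> \<not> x i}"

definition symJ :: "nat set \<Rightarrow> (nat \<Rightarrow> nat) set" where
  "symJ J = {\<pi>. \<pi> permutes J}"

definition perm_act :: "(nat \<Rightarrow> nat) \<Rightarrow> (nat \<Rightarrow> bool) \<Rightarrow> (nat \<Rightarrow> bool)" where
  "perm_act \<pi> x = x \<circ> inv \<pi>"

definition avg :: "'a set \<Rightarrow> ('a \<Rightarrow> real) \<Rightarrow> real" where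
  "avg A g = (\<Sum>a\<in>A. g a) / real (card A)"

definition var :: "'a set \<Rightarrow> ('a \<Rightarrow> real) \<Rightarrow> real" where
  "var A g = avg A (\<lambda>a. (g a - avg A g)^2)"

definition SymInf :: "nat \<Rightarrow> ((nat \<Rightarrow> bool) \<Rightarrow> real) \<Rightarrow> nat set \<Rightarrow> real" where
  "SymInf n f J = avg (cube n \<times> symJ J)
      (\<lambda>(x, \<pi>). if f x \<noteq> f (perm_act \<pi> x) then 1 else 0)"

definition chi :: "nat set \<Rightarrow> (nat \<Rightarrow> bool) \<Rightarrow> real" where
  "chi S x = (-1) ^ card {i\<in>S. x i}"

definition fourier :: "nat \<Rightarrow> ((nat \<Rightarrow> bool) \<Rightarrow> real) \<Rightarrow> nat set \<Rightarrow> real" where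
  "fourier n f S = avg (cube n) (\<lambda>x. f x * chi S x)"

end

theory Submission
  imports Defs
begin

text \<open>By Parseval, the correlation of f with f \<circ> \<pi> is the sum over S of the products of
  Fourier coefficients at S and at \<pi> S, so for a \<plusminus>1-valued f the symmetric influence is
  1/2 minus half the average of this sum over \<pi>. On the other side, the sum over S of the
  variances is the average of the (Parseval-normalised) squared mass, which is 1, minus the
  sum of the squared orbit means; averaging over a second uniform permutation \<sigma> and using
  that (\<sigma>, \<pi>) \<mapsto> \<sigma> \<circ> \<pi> is measure preserving identifies the latter with the same average.\<close>

lemma bij_betw_cube_Pow: "bij_betw (\<lambda>x. {i. x i}) (cube n) (Pow {0..<n})"
  by (rule bij_betw_byWitness[where f'="\<lambda>A i. i \<in> A"]) (auto simp: cube_def not_le)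

lemma finite_cube: "finite (cube n)"
  using bij_betw_cube_Pow bij_betw_finite by blast

lemma card_cube: "card (cube n) = 2 ^ n"
  using bij_betw_same_card[OF bij_betw_cube_Pow] by (simp add: card_Pow)

lemma cube_nonempty: "cube n \<noteq> {}"
  using card_cube[of n] by auto

lemma chi_eq_prod: "finite S \<Longrightarrow> chi S x = (\<Prod>i\<in>S. if x i then -1 else 1)"
  by (simp add: chi_def prod.If_cases Int_def conj_commute)

lemma sum_chi_mult_chi:
  assumes "x \<in> cube n" "y \<in> cube n"
  shows "(\<Sum>S\<in>Pow {0..<n}. chi S x * chi S y) = (if x = y then 2 ^ n else 0)"
proof -
  have "(\<Sum>S\<in>Pow {0..<n}. chi S x * chi S y)
      = (\<Sum>S\<in>Pow {0..<n}. \<Prod>i\<in>S. if x i = y i then 1 else -1)"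
  proof (rule sum.cong[OF refl])
    fix S assume "S \<in> Pow {0..<n}"
    then have "finite S" by (auto intro: finite_subset)
    then show "chi S x * chi S y = (\<Prod>i\<in>S. if x i = y i then 1 else -1)"
      by (auto simp: chi_eq_prod prod.distrib[symmetric] intro!: prod.cong)
  qed
  also have "\<dots> = (\<Prod>i\<in>{0..<n}. (if x i = y i then 1 else -1) + 1)"
    by (simp add: prod_add)
  also have "\<dots> = (if x = y then 2 ^ n else 0)"
  proof (cases "x = y")
    case False
    then obtain i where i: "x i \<noteq> y i" by auto
    with assms have "i < n" unfolding cube_def by (metis mem_Collect_eq not_le)
    with i False show ?thesis by (intro trans[OF prod_zero]) auto
  qed simp
  finally show ?thesis .
qed

theorem parseval:
  "(\<Sum>S\<in>Pow {0..<n}. fourier n f S * fourier n g S) = avg (cube n) (\<lambda>x. f x * g x)"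
proof -
  let ?C = "cube n" and ?N = "real (card (cube n))"
  have "(\<Sum>S\<in>Pow {0..<n}. fourier n f S * fourier n g S)
     = (\<Sum>S\<in>Pow {0..<n}. \<Sum>x\<in>?C. \<Sum>y\<in>?C. f x * g y * (chi S x * chi S y) / ?N^2)"
    unfolding fourier_def avg_def sum_product sum_divide_distrib
    by (intro sum.cong refl) (simp add: power2_eq_square algebra_simps)
  also have "\<dots> = (\<Sum>x\<in>?C. \<Sum>y\<in>?C. f x * g y * (\<Sum>S\<in>Pow {0..<n}. chi S x * chi S y) / ?N^2)"
    unfolding sum_distrib_left sum_divide_distrib
    by (subst sum.swap) (rule sum.cong[OF refl], subst sum.swap, rule refl)
  also have "\<dots> = (\<Sum>x\<in>?C. \<Sum>y\<in>?C. if x = y then f x * g x * 2 ^ n / ?N^2 else 0)"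
    by (intro sum.cong refl) (simp add: sum_chi_mult_chi)
  also have "\<dots> = (\<Sum>x\<in>?C. f x * g x / ?N)"
    using finite_cube by (simp add: sum.delta card_cube power2_eq_square)
  finally show ?thesis by (simp add: avg_def sum_divide_distrib)
qed

lemma avg_cong: "(\<And>a. a \<in> P \<Longrightarrow> g a = h a) \<Longrightarrow> avg P g = avg P h"
  by (simp add: avg_def)

lemma avg_const: "finite P \<Longrightarrow> P \<noteq> {} \<Longrightarrow> avg P (\<lambda>_. c) = c"
  by (simp add: avg_def)

lemma avg_affine:
  "finite P \<Longrightarrow> P \<noteq> {} \<Longrightarrow> avg P (\<lambda>a. c - d * g a) = c - d * avg P g"
  by (simp add: avg_def sum_subtractf sum_distrib_left[symmetric] field_simps card_gt_0_iff)

lemma avg_mult_left: "avg P (\<lambda>a. c * g a) = c * avg P g"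
  by (simp add: avg_def sum_distrib_left)

lemma sum_avg: "(\<Sum>S\<in>B. avg P (g S)) = avg P (\<lambda>a. \<Sum>S\<in>B. g S a)"
  unfolding avg_def sum_divide_distrib[symmetric] by (subst sum.swap) rule

lemma avg_Times:
  "finite A \<Longrightarrow> finite B \<Longrightarrow> avg (A \<times> B) (\<lambda>(x, y). g x y) = avg B (\<lambda>y. avg A (\<lambda>x. g x y))"
  unfolding avg_def card_cartesian_product sum.cartesian_product[symmetric]
    sum_divide_distrib[symmetric]
  by (subst sum.swap) (simp add: field_simps)

lemma avg_reindex_bij:
  "bij_betw h P P \<Longrightarrow> avg P (\<lambda>a. g (h a)) = avg P g"
  unfolding avg_def using sum.reindex_bij_betw[of h P P g] by simp

lemma var_eq_avg_square_minus_square_avg: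
  assumes "finite P" "P \<noteq> {}"
  shows "var P h = avg P (\<lambda>a. (h a)^2) - (avg P h)^2"
proof -
  have "real (card P) > 0" using assms by (simp add: card_gt_0_iff)
  then have "avg P (\<lambda>a. (h a - avg P h)^2)
      = avg P (\<lambda>a. (h a)^2) - 2 * avg P h * avg P h + (avg P h)^2"
    unfolding avg_def power2_diff sum_subtractf sum.distrib
    by (simp add: sum_distrib_left[symmetric] sum_distrib_right[symmetric]
        sum_divide_distrib[symmetric] diff_divide_distrib add_divide_distrib power2_eq_square)
  then show ?thesis by (simp add: var_def power2_eq_square)
qed

lemma sum_var:
  assumes "finite P" "P \<noteq> {}"
  shows "(\<Sum>S\<in>B. var P (g S))
    = avg P (\<lambda>a. \<Sum>S\<in>B. (g S a)^2) - (\<Sum>S\<in>B. (avg P (g S))^2)"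
  by (simp add: var_eq_avg_square_minus_square_avg[OF assms] sum_subtractf sum_avg)

lemma finite_symJ: "J \<subseteq> {0..<n} \<Longrightarrow> finite (symJ J)"
  unfolding symJ_def by (rule finite_permutations) (auto intro: finite_subset)

lemma symJ_nonempty: "symJ J \<noteq> {}"
  unfolding symJ_def using permutes_id by blast

lemma bij_betw_comp_symJ:
  assumes "\<pi> \<in> symJ J"
  shows "bij_betw (\<lambda>\<sigma>. \<sigma> \<circ> \<pi>) (symJ J) (symJ J)"
proof -
  have p: "\<pi> permutes J" using assms by (simp add: symJ_def)
  show ?thesis
  proof (rule bij_betw_byWitness[where f'="\<lambda>\<sigma>. \<sigma> \<circ> inv \<pi>"])
    show "\<forall>\<sigma>\<in>symJ J. \<sigma> \<circ> \<pi> \<circ> inv \<pi> = \<sigma>" "\<forall>\<sigma>\<in>symJ J. \<sigma> \<circ> inv \<pi> \<circ> \<pi> = \<sigma>"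
      using permutes_inv_o[OF p] by (simp_all add: comp_assoc)
    show "(\<lambda>\<sigma>. \<sigma> \<circ> \<pi>) ` symJ J \<subseteq> symJ J" "(\<lambda>\<sigma>. \<sigma> \<circ> inv \<pi>) ` symJ J \<subseteq> symJ J"
      using p permutes_inv[OF p] by (auto simp: symJ_def intro: permutes_compose)
  qed
qed

lemma bij_betw_image_Pow:
  assumes "\<pi> permutes A"
  shows "bij_betw ((`) \<pi>) (Pow A) (Pow A)"
proof (rule bij_betw_byWitness[where f'="(`) (inv \<pi>)"])
  show "\<forall>S\<in>Pow A. inv \<pi> ` \<pi> ` S = S" "\<forall>S\<in>Pow A. \<pi> ` inv \<pi> ` S = S"
    using permutes_inv_o[OF assms] by (simp_all add: image_comp)
  show "(`) \<pi> ` Pow A \<subseteq> Pow A" "(`) (inv \<pi>) ` Pow A \<subseteq> Pow A"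
    by (auto simp: permutes_in_image[OF assms] permutes_in_image[OF permutes_inv[OF assms]])
qed

lemma perm_act_in_cube:
  assumes "\<pi> permutes J" "J \<subseteq> {0..<n}" "x \<in> cube n"
  shows "perm_act \<pi> x \<in> cube n"
proof -
  have "inv \<pi> i = i" if "n \<le> i" for i
    using permutes_not_in[OF permutes_inv[OF assms(1)]] assms(2) that
    by (metis atLeastLessThan_iff not_le subsetD)
  then show ?thesis using assms(3) by (auto simp: cube_def perm_act_def)
qed

lemma bij_betw_perm_act:
  assumes "\<pi> permutes J" "J \<subseteq> {0..<n}"
  shows "bij_betw (perm_act \<pi>) (cube n) (cube n)"
proof (rule bij_betw_byWitness[where f'="perm_act (inv \<pi>)"])
  show "\<forall>x\<in>cube n. perm_act (inv \<pi>) (perm_act \<pi> x) = x"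
    "\<forall>x\<in>cube n. perm_act \<pi> (perm_act (inv \<pi>) x) = x"
    using permutes_inv_o[OF assms(1)] permutes_inv_inv[OF assms(1)]
    by (simp_all add: perm_act_def comp_assoc)
  show "perm_act \<pi> ` cube n \<subseteq> cube n" "perm_act (inv \<pi>) ` cube n \<subseteq> cube n"
    using perm_act_in_cube[OF assms] perm_act_in_cube[OF permutes_inv[OF assms(1)] assms(2)]
    by auto
qed

lemma chi_comp_permutes:
  assumes "\<pi> permutes J" "finite S"
  shows "chi S (y \<circ> \<pi>) = chi (\<pi> ` S) y"
  using assms
  by (simp add: chi_eq_prod prod.reindex[OF inj_on_subset[OF permutes_inj[OF assms(1)]]])

lemma fourier_perm_act:
  assumes "\<pi> permutes J" "J \<subseteq> {0..<n}" "finite S"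
  shows "fourier n (\<lambda>x. f (perm_act \<pi> x)) S = fourier n f (\<pi> ` S)"
proof -
  have "avg (cube n) (\<lambda>x. f (perm_act \<pi> x) * chi S x)
      = avg (cube n) (\<lambda>x. (\<lambda>y. f y * chi S (y \<circ> \<pi>)) (perm_act \<pi> x))"
    using permutes_inv_o[OF assms(1)] by (simp add: perm_act_def comp_assoc)
  also have "\<dots> = avg (cube n) (\<lambda>y. f y * chi (\<pi> ` S) y)"
    using avg_reindex_bij[OF bij_betw_perm_act[OF assms(1,2)]] chi_comp_permutes[OF assms(1,3)]
    by simp
  finally show ?thesis by (simp add: fourier_def)
qed

lemma avg_mult_perm_act_eq_sum_fourier:
  assumes "\<pi> permutes J" "J \<subseteq> {0..<n}"
  shows "avg (cube n) (\<lambda>x. f x * f (perm_act \<pi> x))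
    = (\<Sum>S\<in>Pow {0..<n}. fourier n f S * fourier n f (\<pi> ` S))"
  unfolding parseval[of n f "\<lambda>x. f (perm_act \<pi> x)", symmetric]
proof (rule sum.cong[OF refl])
  fix S assume "S \<in> Pow {0..<n}"
  then have "finite S" by (auto intro: finite_subset)
  then show "fourier n f S * fourier n (\<lambda>x. f (perm_act \<pi> x)) S
      = fourier n f S * fourier n f (\<pi> ` S)"
    by (simp add: fourier_perm_act[OF assms])
qed

lemma SymInf_eq_avg_fourier_correlation:
  assumes f: "\<forall>x\<in>cube n. f x = 1 \<or> f x = -1" and J: "J \<subseteq> {0..<n}"
  shows "SymInf n f J = 1/2 - 1/2 * avg (symJ J)
    (\<lambda>\<pi>. \<Sum>S\<in>Pow {0..<n}. fourier n f S * fourier n f (\<pi> ` S))"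
proof -
  have disagree: "avg (cube n) (\<lambda>x. if f x \<noteq> f (perm_act \<pi> x) then 1 else 0)
      = 1/2 - 1/2 * (\<Sum>S\<in>Pow {0..<n}. fourier n f S * fourier n f (\<pi> ` S))"
    if "\<pi> \<in> symJ J" for \<pi>
  proof -
    from that have \<pi>: "\<pi> permutes J" by (simp add: symJ_def)
    have "(if f x \<noteq> f (perm_act \<pi> x) then 1 else 0) = 1/2 - 1/2 * (f x * f (perm_act \<pi> x))"
      if "x \<in> cube n" for x
    proof -
      have "f x = 1 \<or> f x = -1" "f (perm_act \<pi> x) = 1 \<or> f (perm_act \<pi> x) = -1"
        using f that perm_act_in_cube[OF \<pi> J that] by auto
      then show ?thesis by auto
    qed
    then have "avg (cube n) (\<lambda>x. if f x \<noteq> f (perm_act \<pi> x) then 1 else 0)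
        = avg (cube n) (\<lambda>x. 1/2 - 1/2 * (f x * f (perm_act \<pi> x)))"
      by (rule avg_cong)
    also have "\<dots> = 1/2 - 1/2 * avg (cube n) (\<lambda>x. f x * f (perm_act \<pi> x))"
      by (rule avg_affine[OF finite_cube cube_nonempty])
    finally show ?thesis by (simp only: avg_mult_perm_act_eq_sum_fourier[OF \<pi> J])
  qed
  have "SymInf n f J
      = avg (symJ J) (\<lambda>\<pi>. avg (cube n) (\<lambda>x. if f x \<noteq> f (perm_act \<pi> x) then 1 else 0))"
    unfolding SymInf_def by (rule avg_Times[OF finite_cube finite_symJ[OF J]])
  also have "\<dots> = avg (symJ J)
      (\<lambda>\<pi>. 1/2 - 1/2 * (\<Sum>S\<in>Pow {0..<n}. fourier n f S * fourier n f (\<pi> ` S)))"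
    by (rule avg_cong) (rule disagree)
  also have "\<dots> = 1/2 - 1/2 * avg (symJ J)
      (\<lambda>\<pi>. \<Sum>S\<in>Pow {0..<n}. fourier n f S * fourier n f (\<pi> ` S))"
    by (rule avg_affine[OF finite_symJ[OF J] symJ_nonempty])
  finally show ?thesis .
qed

lemma sum_fourier_image_square:
  assumes f: "\<forall>x\<in>cube n. f x = 1 \<or> f x = -1" and \<pi>: "\<pi> permutes {0..<n}"
  shows "(\<Sum>S\<in>Pow {0..<n}. (fourier n f (\<pi> ` S))^2) = 1"
proof -
  have "(\<Sum>S\<in>Pow {0..<n}. (fourier n f (\<pi> ` S))^2) = (\<Sum>S\<in>Pow {0..<n}. (fourier n f S)^2)"
    by (rule sum.reindex_bij_betw[OF bij_betw_image_Pow[OF \<pi>]])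
  also have "\<dots> = avg (cube n) (\<lambda>x. f x * f x)"
    by (simp add: parseval power2_eq_square)
  also have "\<dots> = avg (cube n) (\<lambda>_. 1)"
    by (rule avg_cong) (use f in auto)
  finally show ?thesis by (simp add: avg_const[OF finite_cube cube_nonempty])
qed

text \<open>The orbit mean m S, the average of F (\<sigma> ` S) over \<sigma>, satisfies m (\<pi> ` S) = m S;
  hence both sides equal the sum of m T * F T over T, whatever F is.\<close>

lemma sum_square_orbit_mean:
  assumes J: "J \<subseteq> {0..<n}"
  shows "(\<Sum>S\<in>Pow {0..<n}. (avg (symJ J) (\<lambda>\<pi>. F (\<pi> ` S)))^2)
    = avg (symJ J) (\<lambda>\<pi>. \<Sum>S\<in>Pow {0..<n}. F S * F (\<pi> ` S))"
proof -
  let ?P = "symJ J" and ?B = "Pow {0..<n}"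
  define m where "m S = avg ?P (\<lambda>\<sigma>. F (\<sigma> ` S))" for S
  have m_image: "m (\<pi> ` S) = m S" if "\<pi> \<in> ?P" for \<pi> S
    using avg_reindex_bij[OF bij_betw_comp_symJ[OF that], of "\<lambda>\<tau>. F (\<tau> ` S)"]
    by (simp add: m_def image_comp)
  have sum_image: "(\<Sum>S\<in>?B. m S * F (\<pi> ` S)) = (\<Sum>T\<in>?B. m T * F T)" if "\<pi> \<in> ?P" for \<pi>
  proof -
    have "\<pi> permutes {0..<n}" using that J by (auto simp: symJ_def intro: permutes_subset)
    then show ?thesis
      using sum.reindex_bij_betw[OF bij_betw_image_Pow, of \<pi> _ "\<lambda>T. m T * F T"] m_image[OF that]
      by simp
  qed
  have "(\<Sum>S\<in>?B. (m S)^2) = avg ?P (\<lambda>\<pi>. \<Sum>S\<in>?B. m S * F (\<pi> ` S))"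
    by (simp add: power2_eq_square m_def avg_mult_left[symmetric] sum_avg)
  also have "\<dots> = (\<Sum>T\<in>?B. m T * F T)"
    by (simp add: sum_image avg_const[OF finite_symJ[OF J] symJ_nonempty] cong: avg_cong)
  also have "\<dots> = avg ?P (\<lambda>\<pi>. \<Sum>S\<in>?B. F S * F (\<pi> ` S))"
    by (simp add: m_def avg_mult_left[symmetric] sum_avg mult.commute)
  finally show ?thesis by (simp add: m_def)
qed

theorem proposition2:
  fixes n :: nat and f :: "(nat \<Rightarrow> bool) \<Rightarrow> real" and J :: "nat set"
  assumes "\<forall>x\<in>cube n. f x = 1 \<or> f x = -1"
    and "J \<subseteq> {0..<n}"
  shows "SymInf n f J
     = 1/2 * (\<Sum>S\<in>Pow {0..<n}. var (symJ J) (\<lambda>\<pi>. fourier n f (\<pi> ` S)))"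
proof -
  let ?F = "fourier n f" and ?P = "symJ J" and ?B = "Pow {0..<n}"
  have "(\<Sum>S\<in>?B. (?F (\<pi> ` S))^2) = 1" if "\<pi> \<in> ?P" for \<pi>
    using that assms by (intro sum_fourier_image_square) (auto simp: symJ_def intro: permutes_subset)
  then have "(\<Sum>S\<in>?B. var ?P (\<lambda>\<pi>. ?F (\<pi> ` S)))
      = 1 - avg ?P (\<lambda>\<pi>. \<Sum>S\<in>?B. ?F S * ?F (\<pi> ` S))"
    using assms(2)
    by (simp add: sum_var finite_symJ symJ_nonempty sum_square_orbit_mean
        avg_const cong: avg_cong)
  then show ?thesis
    using SymInf_eq_avg_fourier_correlation[OF assms] by simp
qed

end
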